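(* Let $\mathcal F$ be the family of all graphs on fewer than $25$ vertices with density $e(F)/v(F)>10/7$, and let $G$ be a $(K_3,1)$-stable graph that contains no member of $\mathcal F$ as a subgraph. Then every connected component of $G$ is isomorphic either to $TT$ or to $DD$.
   Context: With respect to a graph $G$: a bad vertex (bad edge) is a vertex (edge) of $G$ lying in no triangle of $G$; a bad pair is a set $\{u,v\}\subseteq V(G)$ of two vertices such that no triangle of $G$ contains exactly one of $u,v$; a small component is a connected component with at most $4$ vertices. $G$ is $(K_3,1)$-stable if it has no bad vertex, no bad edge, no bad pair and no small component. $TT$ is the graph on $v_1,\dots,v_5$ with edges $v_1v_2,v_1v_3,v_2v_3,v_2v_4,v_3v_4,v_3v_5,v_4v_5$. $DD$ is the graph on $x,y_1,z_1,z_2,y_2,z_3,z_4$ with edges $xy_1,xz_1,xz_2,y_1z_1,y_1z_2,xy_2,xz_3,xz_4,y_2z_3,y_2z_4$. *)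

theory Defs
  imports Complex_Main
begin

definition graph :: "'a set \<Rightarrow> 'a set set \<Rightarrow> bool" where
  "graph V E \<longleftrightarrow> finite V \<and> (\<forall>e\<in>E. \<exists>u v. e = {u, v} \<and> u \<noteq> v \<and> u \<in> V \<and> v \<in> V)"

definition triangle :: "'a set set \<Rightarrow> 'a set \<Rightarrow> bool" where
  "triangle E T \<longleftrightarrow> (\<exists>a b c. T = {a, b, c} \<and> a \<noteq> b \<and> a \<noteq> c \<and> b \<noteq> c
      \<and> {a, b} \<in> E \<and> {a, c} \<in> E \<and> {b, c} \<in> E)"

definition bad_vertex :: "'a set \<Rightarrow> 'a set set \<Rightarrow> 'a \<Rightarrow> bool" where
  "bad_vertex V E v \<longleftrightarrow> v \<in> V \<and> \<not> (\<exists>T. triangle E T \<and> v \<in> T)"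

definition bad_edge :: "'a set set \<Rightarrow> 'a set \<Rightarrow> bool" where
  "bad_edge E e \<longleftrightarrow> e \<in> E \<and> \<not> (\<exists>T. triangle E T \<and> e \<subseteq> T)"

definition bad_pair :: "'a set \<Rightarrow> 'a set set \<Rightarrow> 'a \<Rightarrow> 'a \<Rightarrow> bool" where
  "bad_pair V E u v \<longleftrightarrow> u \<in> V \<and> v \<in> V \<and> u \<noteq> v \<and>
     \<not> (\<exists>T. triangle E T \<and> ((u \<in> T \<and> v \<notin> T) \<or> (v \<in> T \<and> u \<notin> T)))"

definition adj :: "'a set set \<Rightarrow> 'a \<Rightarrow> 'a \<Rightarrow> bool" where
  "adj E u v \<longleftrightarrow> {u, v} \<in> E"

definition component_of :: "'a set \<Rightarrow> 'a set set \<Rightarrow> 'a \<Rightarrow> 'a set" where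
  "component_of V E v = {w \<in> V. (adj E)\<^sup>*\<^sup>* v w}"

definition components :: "'a set \<Rightarrow> 'a set set \<Rightarrow> 'a set set" where
  "components V E = component_of V E ` V"

definition small_component :: "'a set \<Rightarrow> 'a set set \<Rightarrow> 'a set \<Rightarrow> bool" where
  "small_component V E C \<longleftrightarrow> C \<in> components V E \<and> card C \<le> 4"

definition K3_1_stable :: "'a set \<Rightarrow> 'a set set \<Rightarrow> bool" where
  "K3_1_stable V E \<longleftrightarrow>
     (\<forall>v. \<not> bad_vertex V E v) \<and> (\<forall>e. \<not> bad_edge E e) \<and>
     (\<forall>u v. \<not> bad_pair V E u v) \<and> (\<forall>C. \<not> small_component V E C)"

definition induced_edges :: "'a set set \<Rightarrow> 'a set \<Rightarrow> 'a set set" where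
  "induced_edges E S = {e \<in> E. e \<subseteq> S}"

definition isomorphic :: "'a set \<Rightarrow> 'a set set \<Rightarrow> 'b set \<Rightarrow> 'b set set \<Rightarrow> bool" where
  "isomorphic V1 E1 V2 E2 \<longleftrightarrow> (\<exists>f. bij_betw f V1 V2 \<and>
     (\<forall>u\<in>V1. \<forall>v\<in>V1. {u, v} \<in> E1 \<longleftrightarrow> {f u, f v} \<in> E2))"

definition contains_subgraph :: "'b set \<Rightarrow> 'b set set \<Rightarrow> 'a set \<Rightarrow> 'a set set \<Rightarrow> bool" where
  "contains_subgraph FV FE V E \<longleftrightarrow> (\<exists>f. inj_on f FV \<and> f ` FV \<subseteq> V \<and> (\<forall>e\<in>FE. f ` e \<in> E))"

text \<open>TT on v1..v5 (vertices 1..5).\<close>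
definition TT_V :: "nat set" where "TT_V = {1, 2, 3, 4, 5}"
definition TT_E :: "nat set set" where
  "TT_E = {{1,2}, {1,3}, {2,3}, {2,4}, {3,4}, {3,5}, {4,5}}"

text \<open>DD on x=0, y1=1, z1=2, z2=3, y2=4, z3=5, z4=6.\<close>
definition DD_V :: "nat set" where "DD_V = {0, 1, 2, 3, 4, 5, 6}"
definition DD_E :: "nat set set" where
  "DD_E = {{0,1}, {0,2}, {0,3}, {1,2}, {1,3}, {0,4}, {0,5}, {0,6}, {4,5}, {4,6}}"

end

theory Submission
  imports Defs
begin

text \<open>Grow a component \<open>C\<close> from a triangle, either adding a vertex with two neighbours in the
  current set \<open>S\<close> or, when that is impossible, a triangle hanging from a vertex of \<open>S\<close> (an edge
  leaving \<open>S\<close> lies in a triangle, and its third vertex is outside \<open>S\<close> too). After \<open>i\<close> vertex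
  steps and \<open>j\<close> triangle steps \<open>|S| = 3 + i + 2j\<close> and \<open>e(S) \<ge> 3 + 2i + 3j\<close>, so the density
  bound \<open>7 e(S) \<le> 10 |S|\<close>, valid for \<open>|S| < 25\<close>, keeps \<open>4i + j \<le> 9\<close> all the way up to
  \<open>S = C\<close>; once \<open>4i + j \<ge> 3\<close> it also leaves no room for edges other than those created by
  the steps. A last triangle step leaves its two new vertices as a bad pair. If there is only one
  vertex step, the last one, the set before it is a tree of triangles with two pendant triangles,
  no free vertex of one adjacent to a free vertex of the other; each pendant needs a free vertex joined to the
  last vertex \<open>w\<close>, else its free vertices form a bad pair, while the edges at \<open>w\<close> lie in a
  triangle only if the two neighbours of \<open>w\<close> are adjacent. So there are exactly two vertex steps
  and at most one triangle step, and the resulting graphs on 5 or 7 vertices are \<open>TT\<close>, \<open>DD\<close>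
  or contain a bad pair.\<close>

section \<open>Sparse induced subgraphs\<close>

lemma graph_edgeD:
  assumes "graph V E" "{u, v} \<in> E"
  shows "u \<noteq> v" "u \<in> V" "v \<in> V"
  using assms unfolding graph_def by (auto simp: doubleton_eq_iff)

lemma finite_induced_edges: "finite S \<Longrightarrow> finite (induced_edges E S)"
  by (rule finite_subset[of _ "Pow S"]) (auto simp: induced_edges_def)

lemma doubleton_in_induced_edges: "{u, v} \<in> induced_edges E S \<longleftrightarrow> {u, v} \<in> E \<and> u \<in> S \<and> v \<in> S"
  unfolding induced_edges_def by auto

lemma induced_subgraph_copy_on_nat:
  assumes G: "graph V E" and S: "finite S" "S \<subseteq> V"
  obtains FV :: "nat set" and FE where "graph FV FE" "card FV = card S"
    "card FE = card (induced_edges E S)" "contains_subgraph FV FE V E"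
proof -
  obtain g where g: "bij_betw g {0..<card S} S" using ex_bij_betw_nat_finite[OF S(1)] by blast
  define h where "h = inv_into {0..<card S} g"
  have h: "bij_betw h S {0..<card S}" using bij_betw_inv_into[OF g] unfolding h_def .
  have gh: "g ` h ` e = e" if "e \<subseteq> S" for e
    using that g unfolding h_def by (simp add: bij_betw_def image_image f_inv_into_f subset_iff image_ident)
  define FE where "FE = image h ` induced_edges E S"
  have "graph {0..<card S} FE"
    unfolding graph_def FE_def
  proof (intro conjI ballI)
    fix e' assume "e' \<in> image h ` induced_edges E S"
    then obtain u v where "e' = {h u, h v}" "{u, v} \<in> E" "u \<in> S" "v \<in> S"
      using G unfolding induced_edges_def graph_def by fastforce
    moreover have "u \<noteq> v" using G \<open>{u, v} \<in> E\<close> by (rule graph_edgeD)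
    ultimately show "\<exists>a b. e' = {a, b} \<and> a \<noteq> b \<and> a \<in> {0..<card S} \<and> b \<in> {0..<card S}"
      using h by (metis bij_betw_apply bij_betw_imp_inj_on inj_on_contraD)
  qed simp
  moreover have "card FE = card (induced_edges E S)"
    unfolding FE_def
    by (rule card_image, rule inj_on_subset[OF inj_on_image_Pow[OF bij_betw_imp_inj_on[OF h]]])
      (auto simp: induced_edges_def)
  moreover have "contains_subgraph {0..<card S} FE V E"
    unfolding contains_subgraph_def FE_def
    using g S(2) gh by (auto simp: bij_betw_def induced_edges_def intro!: exI[of _ g])
  ultimately show thesis using that[of "{0..<card S}" FE] by simp
qed

lemma sparse_induced_subgraphs:
  assumes G: "graph V E"
    and no_dense: "\<forall>(FV :: nat set) (FE :: nat set set).
           graph FV FE \<and> card FV < 25 \<and> real (card FE) / real (card FV) > (10::real) / 7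
           \<longrightarrow> \<not> contains_subgraph FV FE V E"
    and S: "S \<subseteq> V" "card S < 25"
  shows "7 * card (induced_edges E S) \<le> 10 * card S"
proof (cases "S = {}")
  case True
  then show ?thesis using G by (auto simp: induced_edges_def graph_def)
next
  case False
  have "finite S" using G S(1) unfolding graph_def using finite_subset by blast
  then obtain FV :: "nat set" and FE where F: "graph FV FE" "card FV = card S"
      "card FE = card (induced_edges E S)" "contains_subgraph FV FE V E"
    using induced_subgraph_copy_on_nat G S(1) by blast
  then have "\<not> real (card FE) / real (card FV) > 10 / 7" using no_dense S(2) by auto
  moreover have "card S > 0" using False \<open>finite S\<close> by auto
  ultimately show ?thesis using F(2, 3) by (simp add: field_simps)
qed

section \<open>Triangles and components\<close>

definition tri :: "'a set set \<Rightarrow> 'a \<Rightarrow> 'a \<Rightarrow> 'a \<Rightarrow> bool" where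
  "tri E a b c \<longleftrightarrow> a \<noteq> b \<and> a \<noteq> c \<and> b \<noteq> c \<and> {a, b} \<in> E \<and> {a, c} \<in> E \<and> {b, c} \<in> E"

lemma triangle_iff_tri: "triangle E T \<longleftrightarrow> (\<exists>a b c. T = {a, b, c} \<and> tri E a b c)"
  unfolding triangle_def tri_def by blast

lemma tri_edge:
  assumes "tri E a b c" "u \<in> {a, b, c}" "v \<in> {a, b, c}" "u \<noteq> v"
  shows "{u, v} \<in> E"
  using assms unfolding tri_def by (auto simp: insert_commute)

lemma tri_relabel:
  assumes "tri E a b c" "p \<in> {a, b, c}" "q \<in> {a, b, c}" "p \<noteq> q"
  shows "\<exists>r. {a, b, c} = {p, q, r} \<and> tri E p q r"
proof -
  obtain r where r: "r \<in> {a, b, c}" "r \<noteq> p" "r \<noteq> q"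
    using assms unfolding tri_def by auto
  then have "{a, b, c} = {p, q, r}" using assms unfolding tri_def by auto
  moreover have "tri E p q r" unfolding tri_def using r assms tri_edge[OF assms(1)] by blast
  ultimately show ?thesis by blast
qed

lemma tri_relabel_vertex:
  assumes "tri E a b c" "p \<in> {a, b, c}"
  shows "\<exists>q r. {a, b, c} = {p, q, r} \<and> tri E p q r"
proof -
  obtain q where "q \<in> {a, b, c}" "p \<noteq> q" using assms unfolding tri_def by auto
  from tri_relabel[OF assms this] show ?thesis by blast
qed

lemma tri_doubletons:
  assumes "a \<noteq> b" "a \<noteq> c" "b \<noteq> c"
  shows "{{a, b}, {a, c}, {b, c}} = {e. e \<subseteq> {a, b, c} \<and> card e = 2}"
  using assms by (auto simp: card_2_iff insert_commute)

lemma tri_doubletons_relabel: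
  assumes "tri E a b c" "{a, b, c} = {p, q, r}" "tri E p q r"
  shows "{{a, b}, {a, c}, {b, c}} = {{p, q}, {p, r}, {q, r}}"
  using tri_doubletons[of a b c] tri_doubletons[of p q r] assms unfolding tri_def by simp

lemma stable_vertex_in_tri:
  assumes "K3_1_stable V E" "v \<in> V"
  shows "\<exists>a b. tri E v a b"
proof -
  have "\<not> bad_vertex V E v" using assms(1) unfolding K3_1_stable_def by blast
  then obtain T where "triangle E T" "v \<in> T" using assms(2) unfolding bad_vertex_def by blast
  then obtain a b c where "T = {a, b, c}" "tri E a b c" unfolding triangle_iff_tri by blast
  with tri_relabel_vertex[OF \<open>tri E a b c\<close>] \<open>v \<in> T\<close> show ?thesis by metis
qed

lemma stable_edge_in_tri:
  assumes "K3_1_stable V E" "{x, y} \<in> E" "x \<noteq> y"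
  shows "\<exists>z. tri E x y z"
proof -
  have "\<not> bad_edge E {x, y}" using assms(1) unfolding K3_1_stable_def by blast
  then obtain T where "triangle E T" "{x, y} \<subseteq> T" using assms(2) unfolding bad_edge_def by blast
  then obtain a b c where "T = {a, b, c}" "tri E a b c" unfolding triangle_iff_tri by blast
  with \<open>{x, y} \<subseteq> T\<close> have "x \<in> {a, b, c}" "y \<in> {a, b, c}" by auto
  from tri_relabel[OF \<open>tri E a b c\<close> this assms(3)] show ?thesis by metis
qed

lemma stable_pair_separated:
  assumes "K3_1_stable V E" "y \<in> V" "z \<in> V" "y \<noteq> z"
  shows "\<exists>a b. tri E y a b \<and> z \<notin> {a, b} \<or> tri E z a b \<and> y \<notin> {a, b}"
proof -
  have "\<not> bad_pair V E y z" using assms(1) unfolding K3_1_stable_def by blast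
  then obtain T where "triangle E T" and sep: "y \<in> T \<and> z \<notin> T \<or> z \<in> T \<and> y \<notin> T"
    using assms(2-4) unfolding bad_pair_def by blast
  then obtain a b c where T: "T = {a, b, c}" "tri E a b c" unfolding triangle_iff_tri by blast
  have relabel: "\<exists>p q. tri E v p q \<and> w \<notin> {p, q}" if "v \<in> T" "w \<notin> T" for v w
  proof -
    have "v \<in> {a, b, c}" using that(1) T(1) by simp
    from tri_relabel_vertex[OF T(2) this] obtain p q where "{a, b, c} = {v, p, q}" "tri E v p q"
      by blast
    moreover have "w \<notin> {p, q}" using that(2) T(1) calculation(1) by auto
    ultimately show ?thesis by blast
  qed
  from sep show ?thesis using relabel by blast
qed

lemma rtranclp_adj_sym: "(adj E)\<^sup>*\<^sup>* a b \<Longrightarrow> (adj E)\<^sup>*\<^sup>* b a"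
  by (rule sympD[OF symp_rtranclp]) (auto intro: sympI simp: adj_def insert_commute)

lemma edge_leaving:
  assumes "(adj E)\<^sup>*\<^sup>* a b" "a \<in> S" "b \<notin> S"
  shows "\<exists>x y. x \<in> S \<and> y \<notin> S \<and> {x, y} \<in> E"
  using assms
proof (induction rule: rtranclp_induct)
  case (step y z)
  then show ?case by (cases "y \<in> S") (auto simp: adj_def)
qed simp

lemma component_subset: "C \<in> components V E \<Longrightarrow> C \<subseteq> V"
  unfolding components_def component_of_def by auto

lemma component_connected:
  assumes "C \<in> components V E" "a \<in> C" "b \<in> C"
  shows "(adj E)\<^sup>*\<^sup>* a b"
proof -
  obtain v where "C = component_of V E v" using assms(1) unfolding components_def by blast
  then have "(adj E)\<^sup>*\<^sup>* v a" "(adj E)\<^sup>*\<^sup>* v b"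
    using assms(2, 3) unfolding component_of_def by auto
  then show ?thesis using rtranclp_trans[OF rtranclp_adj_sym] by metis
qed

lemma component_edge_closed:
  assumes "graph V E" "C \<in> components V E" "a \<in> C" "{a, b} \<in> E"
  shows "b \<in> C"
proof -
  obtain v where C: "C = component_of V E v" using assms(2) unfolding components_def by blast
  then have "(adj E)\<^sup>*\<^sup>* v a" using assms(3) unfolding component_of_def by auto
  then have "(adj E)\<^sup>*\<^sup>* v b" using assms(4) unfolding adj_def by (rule rtranclp.rtrancl_into_rtrancl)
  then show ?thesis using C graph_edgeD(3)[OF assms(1, 4)] unfolding component_of_def by simp
qed

section \<open>Recognising \<open>TT\<close> and \<open>DD\<close>\<close>

lemma DD_isomorphicI:
  assumes d: "distinct [x, y1, z1, z2, y2, z3, z4]"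
    and C_eq: "C = {x, y1, z1, z2, y2, z3, z4}"
    and IE: "induced_edges E C = {{x, y1}, {x, z1}, {x, z2}, {y1, z1}, {y1, z2}, {x, y2}, {x, z3}, {x, z4}, {y2, z3}, {y2, z4}}"
  shows "isomorphic C (induced_edges E C) DD_V DD_E"
proof -
  define f :: "_ \<Rightarrow> nat" where "f v = (if v = x then 0 else if v = y1 then 1 else if v = z1 then 2 else
     if v = z2 then 3 else if v = y2 then 4 else if v = z3 then 5 else 6)" for v
  have fv: "f x = 0" "f y1 = 1" "f z1 = 2" "f z2 = 3" "f y2 = 4" "f z3 = 5" "f z4 = 6"
    using d unfolding f_def by auto
  have inj: "inj_on f C" unfolding C_eq inj_on_def using d fv by auto
  have im: "f ` C = DD_V" unfolding C_eq DD_V_def using fv by auto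
  have ed: "\<forall>u\<in>C. \<forall>v\<in>C. {u, v} \<in> induced_edges E C \<longleftrightarrow> {f u, f v} \<in> DD_E"
    unfolding IE unfolding C_eq using d fv by (auto simp: DD_E_def doubleton_eq_iff)
  show ?thesis unfolding isomorphic_def bij_betw_def using inj im ed by blast
qed

lemma TT_isomorphicI:
  assumes d: "distinct [v1, v2, v3, v4, v5]"
    and C_eq: "C = {v1, v2, v3, v4, v5}"
    and IE: "induced_edges E C = {{v1, v2}, {v1, v3}, {v2, v3}, {v2, v4}, {v3, v4}, {v3, v5}, {v4, v5}}"
  shows "isomorphic C (induced_edges E C) TT_V TT_E"
proof -
  define f :: "_ \<Rightarrow> nat" where "f v = (if v = v1 then 1 else if v = v2 then 2 else if v = v3 then 3 else
     if v = v4 then 4 else 5)" for v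
  have fv: "f v1 = 1" "f v2 = 2" "f v3 = 3" "f v4 = 4" "f v5 = 5"
    using d unfolding f_def by auto
  have inj: "inj_on f C" unfolding C_eq inj_on_def using d fv by auto
  have im: "f ` C = TT_V" unfolding C_eq TT_V_def using fv by auto
  have ed: "\<forall>u\<in>C. \<forall>v\<in>C. {u, v} \<in> induced_edges E C \<longleftrightarrow> {f u, f v} \<in> TT_E"
    unfolding IE unfolding C_eq using d fv by (auto simp: TT_E_def doubleton_eq_iff)
  show ?thesis unfolding isomorphic_def bij_betw_def using inj im ed by blast
qed

section \<open>Growing a component from a triangle\<close>

inductive build :: "'a set set \<Rightarrow> 'a set \<Rightarrow> 'a set \<Rightarrow> 'a set set \<Rightarrow> nat \<Rightarrow> nat \<Rightarrow> bool"
  for E C where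
  start: "tri E a b c \<Longrightarrow> {a, b, c} \<subseteq> C \<Longrightarrow> build E C {a, b, c} {{a, b}, {a, c}, {b, c}} 0 0"
| add_vertex: "build E C S F i j \<Longrightarrow> v \<in> C \<Longrightarrow> v \<notin> S \<Longrightarrow> p \<in> S \<Longrightarrow> q \<in> S \<Longrightarrow> p \<noteq> q \<Longrightarrow>
    {v, p} \<in> E \<Longrightarrow> {v, q} \<in> E \<Longrightarrow> build E C (insert v S) ({{v, p}, {v, q}} \<union> F) (Suc i) j"
| add_triangle: "build E C S F i j \<Longrightarrow>
    (\<forall>v\<in>C - S. \<forall>p\<in>S. \<forall>q\<in>S. {v, p} \<in> E \<longrightarrow> {v, q} \<in> E \<longrightarrow> p = q) \<Longrightarrow>
    x \<in> S \<Longrightarrow> y \<in> C \<Longrightarrow> z \<in> C \<Longrightarrow> y \<notin> S \<Longrightarrow> z \<notin> S \<Longrightarrow> tri E x y z \<Longrightarrow>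
    build E C (insert y (insert z S)) ({{x, y}, {x, z}, {y, z}} \<union> F) i (Suc j)"

lemma build_invariants:
  assumes "build E C S F i j"
  shows "S \<subseteq> C" "finite S" "F \<subseteq> induced_edges E S"
    "card S = 3 + i + 2 * j" "card F = 3 + 2 * i + 3 * j"
  using assms
proof (induction rule: build.induct)
  case (start a b c)
  have "card {{a, b}, {a, c}, {b, c}} = 3" using start(1) by (auto simp: tri_def doubleton_eq_iff)
  then show "{a, b, c} \<subseteq> C" "finite {a, b, c}" "{{a, b}, {a, c}, {b, c}} \<subseteq> induced_edges E {a, b, c}"
    "card {a, b, c} = 3 + 0 + 2 * 0" "card {{a, b}, {a, c}, {b, c}} = 3 + 2 * 0 + 3 * 0"
    using start by (auto simp: tri_def induced_edges_def)
next
  case (add_vertex S F i j v p q)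
  have new: "card {{v, p}, {v, q}} = 2" "{{v, p}, {v, q}} \<inter> F = {}"
    using add_vertex by (auto simp: doubleton_eq_iff induced_edges_def)
  have "finite F" using finite_subset[OF add_vertex.IH(3) finite_induced_edges[OF add_vertex.IH(2)]] .
  then show "insert v S \<subseteq> C" "finite (insert v S)"
    "{{v, p}, {v, q}} \<union> F \<subseteq> induced_edges E (insert v S)"
    "card (insert v S) = 3 + Suc i + 2 * j" "card ({{v, p}, {v, q}} \<union> F) = 3 + 2 * Suc i + 3 * j"
    using add_vertex new card_Un_disjoint[of "{{v, p}, {v, q}}" F]
    by (auto simp: induced_edges_def)
next
  case (add_triangle S F i j x y z)
  have new: "card {{x, y}, {x, z}, {y, z}} = 3" "{{x, y}, {x, z}, {y, z}} \<inter> F = {}"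
    using add_triangle by (auto simp: doubleton_eq_iff induced_edges_def tri_def)
  have "finite F" using finite_subset[OF add_triangle.IH(3) finite_induced_edges[OF add_triangle.IH(2)]] .
  moreover have "y \<noteq> z" using \<open>tri E x y z\<close> by (simp add: tri_def)
  ultimately show "insert y (insert z S) \<subseteq> C" "finite (insert y (insert z S))"
    "{{x, y}, {x, z}, {y, z}} \<union> F \<subseteq> induced_edges E (insert y (insert z S))"
    "card (insert y (insert z S)) = 3 + i + 2 * Suc j"
    "card ({{x, y}, {x, z}, {y, z}} \<union> F) = 3 + 2 * i + 3 * Suc j"
    using add_triangle new card_Un_disjoint[of "{{x, y}, {x, z}, {y, z}}" F]
    by (auto simp: induced_edges_def tri_def)
qed

lemma build_start_cases:
  assumes "build E C S F 0 0"
  obtains a b c where "S = {a, b, c}" "F = {{a, b}, {a, c}, {b, c}}" "tri E a b c"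
  using assms by (cases rule: build.cases) auto

definition pendant_tri :: "'a set set \<Rightarrow> 'a \<Rightarrow> 'a \<Rightarrow> 'a \<Rightarrow> bool" where
  "pendant_tri F x y z \<longleftrightarrow> y \<noteq> z \<and> {x, y} \<in> F \<and> {x, z} \<in> F \<and>
     (\<forall>v. {y, v} \<in> F \<or> {z, v} \<in> F \<longrightarrow> v \<in> {x, y, z})"

lemma pendant_tri_Un:
  assumes "pendant_tri F x y z" "\<forall>e\<in>N. y \<notin> e \<and> z \<notin> e"
  shows "pendant_tri (N \<union> F) x y z"
  using assms unfolding pendant_tri_def by blast

lemma pendant_tri_tip_nbr: "pendant_tri F x y z \<Longrightarrow> u \<in> {y, z} \<Longrightarrow> {u, v} \<in> F \<Longrightarrow> v \<in> {x, y, z}"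
  unfolding pendant_tri_def by blast

lemma start_pendant_tri:
  assumes "build E C S F 0 0" "x \<in> S"
  shows "\<exists>t t'. pendant_tri F x t t' \<and> x \<notin> {t, t'}"
proof -
  obtain a b c where S: "S = {a, b, c}" "F = {{a, b}, {a, c}, {b, c}}" "tri E a b c"
    using assms(1) by (rule build_start_cases)
  have "x \<in> {a, b, c}" using assms(2) S(1) by simp
  then obtain t t' where tt: "{a, b, c} = {x, t, t'}" "tri E x t t'"
    using tri_relabel_vertex[OF S(3)] by metis
  have "F = {e. e \<subseteq> {x, t, t'} \<and> card e = 2}"
    using S(2, 3) tt(1) tri_doubletons[of a b c] unfolding tri_def by simp
  then have "pendant_tri F x t t'" using tt(2) unfolding pendant_tri_def tri_def by auto
  moreover have "x \<notin> {t, t'}" using tt(2) unfolding tri_def by auto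
  ultimately show ?thesis by blast
qed

lemma pendant_tips_not_adjacent:
  assumes P: "pendant_tri F x1 y1 z1" "pendant_tri F x2 y2 z2"
    and disjoint: "{y1, z1} \<inter> {y2, z2} = {}"
    and u: "u1 \<in> {y1, z1}" "u2 \<in> {y2, z2}"
  shows "{u1, u2} \<notin> F"
proof
  assume "{u1, u2} \<in> F"
  then have "u2 = x1" using pendant_tri_tip_nbr[OF P(1) u(1)] u(2) disjoint by blast
  then have "{u2, y1} \<in> F" "{u2, z1} \<in> F" using P(1) unfolding pendant_tri_def by auto
  then have "y1 = x2" "z1 = x2" using pendant_tri_tip_nbr[OF P(2) u(2)] disjoint by blast+
  then show False using P(1) unfolding pendant_tri_def by simp
qed

lemma build_two_pendants:
  assumes "build E C S F 0 j" "0 < j"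
  shows "\<exists>x1 y1 z1 x2 y2 z2. pendant_tri F x1 y1 z1 \<and> pendant_tri F x2 y2 z2 \<and> {y1, z1} \<inter> {y2, z2} = {}"
  using assms
proof (induction S F "0::nat" j rule: build.induct)
  case (add_triangle S F j x y z)
  let ?N = "{{x, y}, {x, z}, {y, z}}"
  note inv = build_invariants[OF add_triangle.hyps(1)]
  have "pendant_tri (?N \<union> F) x y z"
    using \<open>tri E x y z\<close> \<open>y \<notin> S\<close> \<open>z \<notin> S\<close> inv(3)
    unfolding pendant_tri_def tri_def induced_edges_def by (auto simp: doubleton_eq_iff)
  moreover have keep: "pendant_tri (?N \<union> F) x' y' z'"
    if "pendant_tri F x' y' z'" "x \<notin> {y', z'}" for x' y' z'
  proof (rule pendant_tri_Un[OF that(1)])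
    have "y' \<in> S" "z' \<in> S" using that(1) inv(3) unfolding pendant_tri_def induced_edges_def by auto
    then show "\<forall>e\<in>?N. y' \<notin> e \<and> z' \<notin> e" using that(2) \<open>y \<notin> S\<close> \<open>z \<notin> S\<close> by auto
  qed
  moreover obtain x' y' z' where old: "pendant_tri F x' y' z'" "x \<notin> {y', z'}"
  proof (cases j)
    case 0
    with add_triangle.hyps(1) have "build E C S F 0 0" by simp
    from start_pendant_tri[OF this \<open>x \<in> S\<close>] show ?thesis using that by blast
  next
    case (Suc j')
    then have "0 < j" by simp
    from add_triangle.hyps(2)[OF this] obtain x1 y1 z1 x2 y2 z2 where
      P: "pendant_tri F x1 y1 z1" "pendant_tri F x2 y2 z2" "{y1, z1} \<inter> {y2, z2} = {}"
      by metis
    show ?thesis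
    proof (cases "x \<in> {y1, z1}")
      case True
      then have "x \<notin> {y2, z2}" using P(3) by blast
      with P(2) show ?thesis by (rule that)
    next
      case False
      with P(1) show ?thesis by (rule that)
    qed
  qed
  moreover have "{y, z} \<inter> {y', z'} = {}"
    using old(1) inv(3) \<open>y \<notin> S\<close> \<open>z \<notin> S\<close> unfolding pendant_tri_def induced_edges_def by auto
  ultimately show ?case using keep[OF old] by blast
qed simp_all

section \<open>Components of a sparse stable graph\<close>

locale sparse_stable_component =
  fixes V :: "'a set" and E :: "'a set set" and C :: "'a set"
  assumes graph: "graph V E" and stable: "K3_1_stable V E"
    and sparse: "\<And>S. S \<subseteq> V \<Longrightarrow> card S < 25 \<Longrightarrow> 7 * card (induced_edges E S) \<le> 10 * card S"
    and component: "C \<in> components V E"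
begin

lemma C_subset: "C \<subseteq> V"
  using component by (rule component_subset)

lemma finite_C: "finite C"
  using graph C_subset unfolding graph_def by (blast intro: finite_subset)

lemma card_C: "5 \<le> card C"
  using stable component unfolding K3_1_stable_def small_component_def by force

lemma edge_closed: "a \<in> C \<Longrightarrow> {a, b} \<in> E \<Longrightarrow> b \<in> C"
  using component_edge_closed[OF graph component] .

lemma edge_neq: "{a, b} \<in> E \<Longrightarrow> a \<noteq> b"
  using graph_edgeD(1)[OF graph] .

lemma edge_iff_induced: "a \<in> C \<Longrightarrow> {a, b} \<in> E \<longleftrightarrow> {a, b} \<in> induced_edges E C"
  using edge_closed by (auto simp: doubleton_in_induced_edges)

lemma build_weight_if_small:
  assumes "build E C S F i j" "card S < 25"
  shows "4 * i + j \<le> 9"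
proof -
  note inv = build_invariants[OF assms(1)]
  have "card F \<le> card (induced_edges E S)"
    using inv(2, 3) by (intro card_mono finite_induced_edges)
  moreover have "7 * card (induced_edges E S) \<le> 10 * card S"
    using inv(1) C_subset assms(2) by (intro sparse) auto
  ultimately show ?thesis using inv(4, 5) by linarith
qed

lemma build_weight: "build E C S F i j \<Longrightarrow> 4 * i + j \<le> 9"
proof (induction rule: build.induct)
  case (start a b c)
  then show ?case by simp
next
  case (add_vertex S F i j v p q)
  from add_vertex.hyps have "build E C (insert v S) ({{v, p}, {v, q}} \<union> F) (Suc i) j"
    by (rule build.add_vertex)
  moreover have "card (insert v S) < 25"
    using build_invariants(4)[OF calculation] add_vertex.IH by linarith
  ultimately show ?case by (rule build_weight_if_small)
next
  case (add_triangle S F i j x y z)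
  from add_triangle.hyps have "build E C (insert y (insert z S)) ({{x, y}, {x, z}, {y, z}} \<union> F) i (Suc j)"
    by (rule build.add_triangle)
  moreover have "card (insert y (insert z S)) < 25"
    using build_invariants(4)[OF calculation] add_triangle.IH by simp
  ultimately show ?case by (rule build_weight_if_small)
qed

lemma build_edges_exact:
  assumes b: "build E C S F i j" and slack: "3 \<le> 4 * i + j"
  shows "induced_edges E S = F"
proof (rule ccontr)
  assume "induced_edges E S \<noteq> F"
  note inv = build_invariants[OF b]
  have "4 * i + j \<le> 9" using build_weight[OF b] .
  then have "card S < 25" using inv(4) by linarith
  then have "7 * card (induced_edges E S) \<le> 10 * card S"
    using inv(1) C_subset by (intro sparse) auto
  moreover have "card F < card (induced_edges E S)"
    using inv(2, 3) \<open>induced_edges E S \<noteq> F\<close> by (intro psubset_card_mono finite_induced_edges) auto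
  ultimately show False using inv(4, 5) slack by linarith
qed

lemma triangle_leaving:
  assumes S: "S \<subseteq> C" "S \<noteq> {}" "S \<noteq> C"
    and guard: "\<forall>v\<in>C - S. \<forall>p\<in>S. \<forall>q\<in>S. {v, p} \<in> E \<longrightarrow> {v, q} \<in> E \<longrightarrow> p = q"
  obtains x y z where "x \<in> S" "y \<in> C" "z \<in> C" "y \<notin> S" "z \<notin> S" "tri E x y z"
proof -
  obtain w where "w \<in> C" "w \<notin> S" using S(1,3) by blast
  obtain s where "s \<in> S" using S(2) by blast
  have "(adj E)\<^sup>*\<^sup>* s w"
    using component_connected[OF component subsetD[OF S(1) \<open>s \<in> S\<close>] \<open>w \<in> C\<close>] .
  from edge_leaving[OF this \<open>s \<in> S\<close> \<open>w \<notin> S\<close>]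
  obtain x y where xy: "x \<in> S" "y \<notin> S" "{x, y} \<in> E" by blast
  obtain z where t: "tri E x y z" using stable_edge_in_tri[OF stable xy(3) edge_neq[OF xy(3)]] ..
  have yC: "y \<in> C" using edge_closed[OF subsetD[OF S(1) xy(1)] xy(3)] .
  have zC: "z \<in> C" using edge_closed[OF yC] t unfolding tri_def by blast
  have "z \<notin> S"
  proof
    assume "z \<in> S"
    moreover have "{y, x} \<in> E" "{y, z} \<in> E" using t unfolding tri_def by (auto simp: insert_commute)
    ultimately have "x = z" using guard yC xy(1, 2) by auto
    then show False using t unfolding tri_def by simp
  qed
  from that[OF xy(1) yC zC xy(2) this t] show thesis .
qed

lemma build_extends:
  assumes b: "build E C S F i j" and "S \<noteq> C"
  shows "\<exists>S' F' i' j'. build E C S' F' i' j' \<and> card S < card S'"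
proof -
  note inv = build_invariants[OF b]
  show ?thesis
  proof (cases "\<exists>v\<in>C - S. \<exists>p\<in>S. \<exists>q\<in>S. p \<noteq> q \<and> {v, p} \<in> E \<and> {v, q} \<in> E")
    case True
    then obtain v p q where "v \<in> C" "v \<notin> S" "p \<in> S" "q \<in> S" "p \<noteq> q" "{v, p} \<in> E" "{v, q} \<in> E"
      by auto
    with b have "build E C (insert v S) ({{v, p}, {v, q}} \<union> F) (Suc i) j" by (rule build.add_vertex)
    moreover have "card S < card (insert v S)" using inv(2) \<open>v \<notin> S\<close> by simp
    ultimately show ?thesis by blast
  next
    case False
    then have guard: "\<forall>v\<in>C - S. \<forall>p\<in>S. \<forall>q\<in>S. {v, p} \<in> E \<longrightarrow> {v, q} \<in> E \<longrightarrow> p = q" by blast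
    have "S \<noteq> {}" using inv(4) by auto
    then obtain x y z where "x \<in> S" "y \<in> C" "z \<in> C" "y \<notin> S" "z \<notin> S" "tri E x y z"
      using triangle_leaving inv(1) \<open>S \<noteq> C\<close> guard by metis
    with b guard have "build E C (insert y (insert z S)) ({{x, y}, {x, z}, {y, z}} \<union> F) i (Suc j)"
      by (intro build.add_triangle)
    moreover have "card S < card (insert y (insert z S))"
      using build_invariants(4)[OF calculation] inv(4) by simp
    ultimately show ?thesis by blast
  qed
qed

lemma build_exhausts: "\<exists>F i j. build E C C F i j"
proof -
  have "\<exists>F' i' j'. build E C C F' i' j'" if "build E C S F i j" for S F i j
    using that
  proof (induction "card C - card S" arbitrary: S F i j rule: less_induct)
    case less
    show ?case
    proof (cases "S = C")
      case False
      then obtain S' F' i' j' where "build E C S' F' i' j'" "card S < card S'"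
        using build_extends[OF less.prems] by blast
      moreover have "card S' \<le> card C"
        using build_invariants(1)[OF calculation(1)] finite_C by (rule card_mono[rotated])
      ultimately show ?thesis using less.hyps by (meson diff_less_mono2 order_less_le_trans)
    qed (use less.prems in blast)
  qed
  moreover obtain v where "v \<in> C" using card_C by fastforce
  moreover obtain a b where "tri E v a b" using stable_vertex_in_tri[OF stable] calculation(2) C_subset by blast
  moreover have "{v, a, b} \<subseteq> C" using edge_closed calculation(2, 3) unfolding tri_def by blast
  ultimately show ?thesis by (blast intro: build.start)
qed

lemma no_unseparated_pair:
  assumes "y \<in> C" "z \<in> C" "y \<noteq> z"
    and y: "\<And>a b. {y, a} \<in> induced_edges E C \<Longrightarrow> {y, b} \<in> induced_edges E C \<Longrightarrow>
      {a, b} \<in> induced_edges E C \<Longrightarrow> a \<noteq> b \<Longrightarrow> z \<in> {a, b}"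
    and z: "\<And>a b. {z, a} \<in> induced_edges E C \<Longrightarrow> {z, b} \<in> induced_edges E C \<Longrightarrow>
      {a, b} \<in> induced_edges E C \<Longrightarrow> a \<noteq> b \<Longrightarrow> y \<in> {a, b}"
  shows False
proof -
  have in_C: "{v, a} \<in> induced_edges E C \<and> {v, b} \<in> induced_edges E C \<and> {a, b} \<in> induced_edges E C \<and> a \<noteq> b"
    if "tri E v a b" "v \<in> C" for v a b
  proof -
    have "a \<in> C" using edge_closed[OF that(2)] that(1) unfolding tri_def by blast
    then show ?thesis using that edge_iff_induced unfolding tri_def by blast
  qed
  obtain a b where "tri E y a b \<and> z \<notin> {a, b} \<or> tri E z a b \<and> y \<notin> {a, b}"
    using stable_pair_separated[OF stable subsetD[OF C_subset assms(1)] subsetD[OF C_subset assms(2)] assms(3)]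
    by blast
  then show False
  proof (elim disjE conjE)
    assume "tri E y a b" "z \<notin> {a, b}"
    then show False using y[of a b] in_C[OF \<open>tri E y a b\<close> assms(1)] by blast
  next
    assume "tri E z a b" "y \<notin> {a, b}"
    then show False using z[of a b] in_C[OF \<open>tri E z a b\<close> assms(2)] by blast
  qed
qed

lemma no_twin_tips:
  assumes "y \<in> C" "z \<in> C" "y \<noteq> z"
    and "\<And>v. {y, v} \<in> E \<Longrightarrow> v \<in> {x, z}" "\<And>v. {z, v} \<in> E \<Longrightarrow> v \<in> {x, y}"
  shows False
proof (rule no_unseparated_pair[OF assms(1-3)])
  show "z \<in> {a, b}" if "{y, a} \<in> induced_edges E C" "{y, b} \<in> induced_edges E C" "a \<noteq> b" for a b
    using that assms(4)[of a] assms(4)[of b] unfolding induced_edges_def by blast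
  show "y \<in> {a, b}" if "{z, a} \<in> induced_edges E C" "{z, b} \<in> induced_edges E C" "a \<noteq> b" for a b
    using that assms(5)[of a] assms(5)[of b] unfolding induced_edges_def by blast
qed

lemma last_step_not_triangle:
  assumes guard: "\<forall>v\<in>C - S. \<forall>p\<in>S. \<forall>q\<in>S. {v, p} \<in> E \<longrightarrow> {v, q} \<in> E \<longrightarrow> p = q"
    and "x \<in> S" "y \<notin> S" "z \<notin> S" "tri E x y z" and C: "C = insert y (insert z S)"
  shows False
proof (rule no_twin_tips)
  show "y \<in> C" "z \<in> C" "y \<noteq> z" using C \<open>tri E x y z\<close> unfolding tri_def by auto
  have tip_nbr: "v \<in> {x, u'}"
    if "{u, v} \<in> E" "u \<in> {y, z}" "u' \<in> {y, z}" "u \<noteq> u'" for u u' v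
  proof -
    have "u \<in> C - S" "{u, x} \<in> E"
      using that(2) C \<open>y \<notin> S\<close> \<open>z \<notin> S\<close> \<open>tri E x y z\<close> unfolding tri_def
      by (auto simp: insert_commute)
    moreover have "v \<in> C" "v \<noteq> u" using edge_closed that(1) edge_neq calculation(1) by auto
    then have "v \<in> S \<or> v = u'" using that(2-4) C by auto
    ultimately show ?thesis using guard \<open>x \<in> S\<close> that(1) by blast
  qed
  show "v \<in> {x, z}" if "{y, v} \<in> E" for v
    using tip_nbr[OF that] \<open>y \<noteq> z\<close> by blast
  show "v \<in> {x, y}" if "{z, v} \<in> E" for v
    using tip_nbr[OF that] \<open>y \<noteq> z\<close> by blast
qed

lemma single_vertex_step_impossible:
  assumes b: "build E C S F 0 j" and C: "C = insert w S" and w: "w \<notin> S"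
    and pq: "p \<in> S" "q \<in> S" "p \<noteq> q" "{w, p} \<in> E" "{w, q} \<in> E"
  shows False
proof -
  let ?F = "{{w, p}, {w, q}} \<union> F"
  note inv = build_invariants[OF b]
  have "w \<in> C" using C by simp
  from build.add_vertex[OF b this w pq] have "build E C C ?F 1 j" unfolding C[symmetric] by simp
  from build_edges_exact[OF this] have exact: "induced_edges E C = ?F" by simp
  have edge: "{a, v} \<in> ?F" if "a \<in> C" "{a, v} \<in> E" for a v
    using edge_iff_induced[OF that(1)] that(2) exact by simp
  have not_w: "{a, v} \<in> F" if "a \<in> C" "{a, v} \<in> E" "a \<notin> {w, p, q}" for a v
    using edge[OF that(1, 2)] that(3) by (auto simp: doubleton_eq_iff)
  have "j \<noteq> 0"
  proof
    assume "j = 0"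
    then have "card C = 4" using inv(2, 4) C w by simp
    then show False using card_C by simp
  qed
  then obtain x1 y1 z1 x2 y2 z2 where P: "pendant_tri F x1 y1 z1" "pendant_tri F x2 y2 z2"
    and disjoint: "{y1, z1} \<inter> {y2, z2} = {}"
    using build_two_pendants[OF b] by (metis neq0_conv)
  have w_nbr: "r \<in> {p, q}" if "{w, r} \<in> E" for r
    using edge[OF \<open>w \<in> C\<close> that] w inv(3) unfolding induced_edges_def by (auto simp: doubleton_eq_iff)
  obtain r where "tri E w p r" using stable_edge_in_tri[OF stable pq(4) edge_neq[OF pq(4)]] ..
  then have "{p, q} \<in> E" using w_nbr unfolding tri_def by auto
  moreover have "p \<in> C" "w \<notin> {p, q}" using C w pq by auto
  ultimately have "{p, q} \<in> F" using edge by (auto simp: doubleton_eq_iff)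
  have tip_in_pq: "y' \<in> {p, q} \<or> z' \<in> {p, q}" if P': "pendant_tri F x' y' z'" for x' y' z'
  proof (rule ccontr)
    assume no_tip: "\<not> (y' \<in> {p, q} \<or> z' \<in> {p, q})"
    have "y' \<in> S" "z' \<in> S" using P' inv(3) unfolding pendant_tri_def induced_edges_def by auto
    then have in_C: "y' \<in> C" "z' \<in> C" "y' \<notin> {w, p, q}" "z' \<notin> {w, p, q}" using C w no_tip by auto
    show False
    proof (rule no_twin_tips[OF in_C(1, 2)])
      show "y' \<noteq> z'" using P' unfolding pendant_tri_def by simp
      show "v \<in> {x', z'}" if "{y', v} \<in> E" for v
        using not_w[OF in_C(1) that in_C(3)] P' edge_neq[OF that] unfolding pendant_tri_def by blast
      show "v \<in> {x', y'}" if "{z', v} \<in> E" for v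
        using not_w[OF in_C(2) that in_C(4)] P' edge_neq[OF that] unfolding pendant_tri_def by blast
    qed
  qed
  obtain u1 where u1: "u1 \<in> {y1, z1}" "u1 \<in> {p, q}" using tip_in_pq[OF P(1)] by blast
  obtain u2 where u2: "u2 \<in> {y2, z2}" "u2 \<in> {p, q}" using tip_in_pq[OF P(2)] by blast
  have "u1 \<noteq> u2" using u1(1) u2(1) disjoint by blast
  then have "{u1, u2} = {p, q}" using u1(2) u2(2) by auto
  with \<open>{p, q} \<in> F\<close> show False using pendant_tips_not_adjacent[OF P disjoint u1(1) u2(1)] by simp
qed

lemma last_vertex_closes_triangle:
  assumes wC: "w \<in> C" and Nw: "\<And>r. {w, r} \<in> induced_edges E C \<Longrightarrow> r = p \<or> r = q"
    and wp: "{w, p} \<in> induced_edges E C"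
  shows "{p, q} \<in> induced_edges E C"
proof -
  have "{w, p} \<in> E" using wp unfolding induced_edges_def by auto
  then obtain r where t: "tri E w p r" using stable_edge_in_tri[OF stable _ edge_neq] by blast
  then have "{w, r} \<in> E" "r \<noteq> p" "{p, r} \<in> E" unfolding tri_def by auto
  then have "r = q" "{p, r} \<in> E" using Nw edge_iff_induced wC by blast+
  moreover have "p \<in> C" using edge_closed[OF wC \<open>{w, p} \<in> E\<close>] .
  ultimately show ?thesis using edge_iff_induced by blast
qed

text \<open>The configurations reached at the end: a diamond, i.e.\ \<open>K\<^sub>4\<close> minus an edge, possibly
  with a triangle hanging from one of its vertices, or two triangles sharing a vertex \<open>x\<close> and a
  vertex \<open>u\<close> joined to one other vertex of each; in each case the last vertex \<open>w\<close> is joined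
  exactly to \<open>p\<close> and \<open>q\<close>.\<close>

lemma diamond_and_vertex_TT:
  assumes d: "distinct [p1, q1, r1, u, w]"
    and C_eq: "C = {p1, q1, r1, u, w}"
    and IE: "induced_edges E C = {{p1, q1}, {p1, r1}, {q1, r1}, {u, p1}, {u, q1}, {w, p}, {w, q}}"
    and pq: "p \<in> {p1, q1, r1, u}" "q \<in> {p1, q1, r1, u}" "p \<noteq> q"
  shows "isomorphic C (induced_edges E C) TT_V TT_E"
proof -
  have "{p, q} \<in> induced_edges E C"
  proof (rule last_vertex_closes_triangle[of w])
    show "w \<in> C" using C_eq by simp
  qed (use d pq in \<open>auto simp: IE doubleton_eq_iff\<close>)
  then have "{p, q} \<in> {{p1, q1}, {p1, r1}, {q1, r1}, {u, p1}, {u, q1}}"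
    using d pq unfolding IE by (auto simp: doubleton_eq_iff)
  then consider "{p, q} = {p1, q1}" | "{p, q} = {p1, r1}" | "{p, q} = {q1, r1}" | "{p, q} = {u, p1}" | "{p, q} = {u, q1}"
    by blast
  then show ?thesis
  proof cases
    case 1
    have IE1: "induced_edges E C = {{p1, q1}, {p1, r1}, {q1, r1}, {u, p1}, {u, q1}, {w, p1}, {w, q1}}"
      using doubleton_eq_iff[THEN iffD1, OF 1] IE by (elim disjE conjE) (simp_all add: insert_commute)
    show ?thesis
    proof (rule FalseE, rule no_unseparated_pair[of p1 q1])
      show "p1 \<in> C" "q1 \<in> C" "p1 \<noteq> q1" using d C_eq by auto
    qed (use d in \<open>auto simp: IE1 doubleton_eq_iff\<close>)
  next
    case 2
    have i1: "induced_edges E C = {{u, q1}, {u, p1}, {q1, p1}, {q1, r1}, {p1, r1}, {p1, w}, {r1, w}}"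
      using doubleton_eq_iff[THEN iffD1, OF 2] IE by (elim disjE conjE) (simp_all add: insert_commute)
    have i2: "distinct [u, q1, p1, r1, w]" using d by auto
    have i3: "C = {u, q1, p1, r1, w}" using C_eq by (simp add: insert_commute)
    show ?thesis by (rule TT_isomorphicI[OF i2 i3 i1])
  next
    case 3
    have i1: "induced_edges E C = {{u, p1}, {u, q1}, {p1, q1}, {p1, r1}, {q1, r1}, {q1, w}, {r1, w}}"
      using doubleton_eq_iff[THEN iffD1, OF 3] IE by (elim disjE conjE) (simp_all add: insert_commute)
    have i2: "distinct [u, p1, q1, r1, w]" using d by auto
    have i3: "C = {u, p1, q1, r1, w}" using C_eq by (simp add: insert_commute)
    show ?thesis by (rule TT_isomorphicI[OF i2 i3 i1])
  next
    case 4
    have i1: "induced_edges E C = {{r1, q1}, {r1, p1}, {q1, p1}, {q1, u}, {p1, u}, {p1, w}, {u, w}}"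
      using doubleton_eq_iff[THEN iffD1, OF 4] IE by (elim disjE conjE) (simp_all add: insert_commute)
    have i2: "distinct [r1, q1, p1, u, w]" using d by auto
    have i3: "C = {r1, q1, p1, u, w}" using C_eq by (simp add: insert_commute)
    show ?thesis by (rule TT_isomorphicI[OF i2 i3 i1])
  next
    case 5
    have i1: "induced_edges E C = {{r1, p1}, {r1, q1}, {p1, q1}, {p1, u}, {q1, u}, {q1, w}, {u, w}}"
      using doubleton_eq_iff[THEN iffD1, OF 5] IE by (elim disjE conjE) (simp_all add: insert_commute)
    have i2: "distinct [r1, p1, q1, u, w]" using d by auto
    have i3: "C = {r1, p1, q1, u, w}" using C_eq by (simp add: insert_commute)
    show ?thesis by (rule TT_isomorphicI[OF i2 i3 i1])
  qed
qed

lemma diamond_hub_triangle_and_vertex_DD: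
  assumes d: "distinct [x, t, t', u, y, z, w]"
    and C_eq: "C = {x, t, t', u, y, z, w}"
    and IE: "induced_edges E C = {{x, t}, {x, t'}, {t, t'}, {x, u}, {t, u}, {x, y}, {x, z}, {y, z}, {w, p}, {w, q}}"
    and pq: "p \<in> {x, t, t', u, y, z}" "q \<in> {x, t, t', u, y, z}" "p \<noteq> q"
  shows "isomorphic C (induced_edges E C) DD_V DD_E"
proof -
  have "{p, q} \<in> induced_edges E C"
  proof (rule last_vertex_closes_triangle[of w])
    show "w \<in> C" using C_eq by simp
  qed (use d pq in \<open>auto simp: IE doubleton_eq_iff\<close>)
  then have "{p, q} \<in> {{x, t}, {x, t'}, {t, t'}, {x, u}, {t, u}, {x, y}, {x, z}, {y, z}}"
    using d pq unfolding IE by (auto simp: doubleton_eq_iff)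
  then consider "{p, q} = {x, y}" | "{p, q} = {x, z}" | "{p, q} = {y, z}" | "y \<noteq> p" "y \<noteq> q" "z \<noteq> p" "z \<noteq> q"
    using d by (auto simp: doubleton_eq_iff)
  then show ?thesis
  proof cases
    case 1
    have "induced_edges E C = {{x, t}, {x, t'}, {x, u}, {t, t'}, {t, u}, {x, y}, {x, z}, {x, w}, {y, z}, {y, w}}"
      using doubleton_eq_iff[THEN iffD1, OF 1] IE by (elim disjE conjE) (simp_all add: insert_commute)
    then show ?thesis by (rule DD_isomorphicI[OF d C_eq])
  next
    case 2
    have i1: "induced_edges E C = {{x, t}, {x, t'}, {x, u}, {t, t'}, {t, u}, {x, z}, {x, y}, {x, w}, {z, y}, {z, w}}"
      using doubleton_eq_iff[THEN iffD1, OF 2] IE by (elim disjE conjE) (simp_all add: insert_commute)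
    have i2: "distinct [x, t, t', u, z, y, w]" using d by auto
    have i3: "C = {x, t, t', u, z, y, w}" using C_eq by (simp add: insert_commute)
    show ?thesis by (rule DD_isomorphicI[OF i2 i3 i1])
  next
    case 3
    have IE3: "induced_edges E C = {{x, t}, {x, t'}, {t, t'}, {x, u}, {t, u}, {x, y}, {x, z}, {y, z}, {w, y}, {w, z}}"
      using doubleton_eq_iff[THEN iffD1, OF 3] IE by (elim disjE conjE) (simp_all add: insert_commute)
    show ?thesis
    proof (rule FalseE, rule no_unseparated_pair[of y z])
      show "y \<in> C" "z \<in> C" "y \<noteq> z" using d C_eq by auto
    qed (use d in \<open>auto simp: IE3 doubleton_eq_iff\<close>)
  next
    case 4
    show ?thesis
    proof (rule FalseE, rule no_unseparated_pair[of y z])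
      show "y \<in> C" "z \<in> C" "y \<noteq> z" using d C_eq by auto
    qed (use d 4 in \<open>auto simp: IE doubleton_eq_iff\<close>)
  qed
qed

lemma diamond_tip_triangle_and_vertex_impossible:
  assumes d: "distinct [s1, s2, x, u, y, z, w]"
    and C_eq: "C = {s1, s2, x, u, y, z, w}"
    and IE: "induced_edges E C = {{s1, s2}, {s1, x}, {s2, x}, {s1, u}, {s2, u}, {x, y}, {x, z}, {y, z}, {w, p}, {w, q}}"
    and pq: "p \<in> {s1, s2, x, u, y, z}" "q \<in> {s1, s2, x, u, y, z}" "p \<noteq> q"
  shows False
proof -
  have "{p, q} \<in> induced_edges E C"
  proof (rule last_vertex_closes_triangle[of w])
    show "w \<in> C" using C_eq by simp
  qed (use d pq in \<open>auto simp: IE doubleton_eq_iff\<close>)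
  then have "{p, q} \<in> {{s1, s2}, {s1, x}, {s2, x}, {s1, u}, {s2, u}, {x, y}, {x, z}, {y, z}}"
    using d pq unfolding IE by (auto simp: doubleton_eq_iff)
  then consider "{p, q} = {x, y}" | "{p, q} = {x, z}" | "{p, q} = {y, z}" | "y \<noteq> p" "y \<noteq> q" "z \<noteq> p" "z \<noteq> q"
    using d by (auto simp: doubleton_eq_iff)
  then show ?thesis
  proof cases
    case 1
    have IE1: "induced_edges E C = {{s1, s2}, {s1, x}, {s2, x}, {s1, u}, {s2, u}, {x, y}, {x, z}, {y, z}, {w, x}, {w, y}}"
      using doubleton_eq_iff[THEN iffD1, OF 1] IE by (elim disjE conjE) (simp_all add: insert_commute)
    show ?thesis
    proof (rule no_unseparated_pair[of s1 s2])
      show "s1 \<in> C" "s2 \<in> C" "s1 \<noteq> s2" using d C_eq by auto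
    qed (use d in \<open>auto simp: IE1 doubleton_eq_iff\<close>)
  next
    case 2
    have IE2: "induced_edges E C = {{s1, s2}, {s1, x}, {s2, x}, {s1, u}, {s2, u}, {x, y}, {x, z}, {y, z}, {w, x}, {w, z}}"
      using doubleton_eq_iff[THEN iffD1, OF 2] IE by (elim disjE conjE) (simp_all add: insert_commute)
    show ?thesis
    proof (rule no_unseparated_pair[of s1 s2])
      show "s1 \<in> C" "s2 \<in> C" "s1 \<noteq> s2" using d C_eq by auto
    qed (use d in \<open>auto simp: IE2 doubleton_eq_iff\<close>)
  next
    case 3
    have IE3: "induced_edges E C = {{s1, s2}, {s1, x}, {s2, x}, {s1, u}, {s2, u}, {x, y}, {x, z}, {y, z}, {w, y}, {w, z}}"
      using doubleton_eq_iff[THEN iffD1, OF 3] IE by (elim disjE conjE) (simp_all add: insert_commute)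
    show ?thesis
    proof (rule no_unseparated_pair[of s1 s2])
      show "s1 \<in> C" "s2 \<in> C" "s1 \<noteq> s2" using d C_eq by auto
    qed (use d in \<open>auto simp: IE3 doubleton_eq_iff\<close>)
  next
    case 4
    show ?thesis
    proof (rule no_unseparated_pair[of y z])
      show "y \<in> C" "z \<in> C" "y \<noteq> z" using d C_eq by auto
    qed (use d 4 in \<open>auto simp: IE doubleton_eq_iff\<close>)
  qed
qed

lemma bowtie_cross_vertex_impossible:
  assumes d: "distinct [x, t, t', y, z, u, w]"
    and C_eq: "C = {x, t, t', y, z, u, w}"
    and IE: "induced_edges E C = {{x, t}, {x, t'}, {t, t'}, {x, y}, {x, z}, {y, z}, {u, t}, {u, y}, {w, p}, {w, q}}"
    and pq: "p \<noteq> q"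
  shows False
proof -
  have uC: "u \<in> C" using C_eq by simp
  have "{u, t} \<in> induced_edges E C" "{u, y} \<in> induced_edges E C" unfolding IE by simp_all
  then have "{u, t} \<in> E" "{u, y} \<in> E" unfolding induced_edges_def by auto
  obtain r where r: "tri E u t r" using stable_edge_in_tri[OF stable \<open>{u, t} \<in> E\<close> edge_neq[OF \<open>{u, t} \<in> E\<close>]] by blast
  obtain r' where r': "tri E u y r'" using stable_edge_in_tri[OF stable \<open>{u, y} \<in> E\<close> edge_neq[OF \<open>{u, y} \<in> E\<close>]] by blast
  have tC: "t \<in> C" "y \<in> C" using C_eq by auto
  have Nw: "\<And>v. {w, v} \<in> induced_edges E C \<Longrightarrow> v = p \<or> v = q"
    using d unfolding IE by (auto simp: doubleton_eq_iff)
  have Nu: "\<And>v. {u, v} \<in> induced_edges E C \<Longrightarrow> v = t \<or> v = y \<or> v = w"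
    using d unfolding IE by (auto simp: doubleton_eq_iff)
  have nty: "{t, y} \<notin> induced_edges E C" "{y, t} \<notin> induced_edges E C"
    using d unfolding IE by (auto simp: doubleton_eq_iff)
  have e1: "{u, r} \<in> induced_edges E C" "{t, r} \<in> induced_edges E C" "r \<noteq> t"
    using r edge_iff_induced uC tC unfolding tri_def by auto
  have "r = w" using Nu[OF e1(1)] e1(2, 3) nty by auto
  then have h1: "u = p \<or> u = q" "t = p \<or> t = q" using Nw e1 by (auto simp: insert_commute)
  have e2: "{u, r'} \<in> induced_edges E C" "{y, r'} \<in> induced_edges E C" "r' \<noteq> y"
    using r' edge_iff_induced uC tC unfolding tri_def by auto
  have "r' = w" using Nu[OF e2(1)] e2(2, 3) nty by auto
  then have h2: "y = p \<or> y = q" using Nw e2 by (auto simp: insert_commute)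
  show False using h1 h2 d pq by auto
qed

lemma vertex_vertex_steps_TT:
  assumes T: "tri E a b c" and u: "u \<notin> {a, b, c}" "p1 \<in> {a, b, c}" "q1 \<in> {a, b, c}" "p1 \<noteq> q1"
    and w: "w \<notin> insert u {a, b, c}" "p \<in> insert u {a, b, c}" "q \<in> insert u {a, b, c}" "p \<noteq> q"
    and C: "C = insert w (insert u {a, b, c})"
    and IE: "induced_edges E C = {{w, p}, {w, q}} \<union> ({{u, p1}, {u, q1}} \<union> {{a, b}, {a, c}, {b, c}})"
  shows "isomorphic C (induced_edges E C) TT_V TT_E"
proof -
  obtain r1 where r1: "{a, b, c} = {p1, q1, r1}" "tri E p1 q1 r1" using tri_relabel[OF T u(2-4)] by metis
  have IE': "induced_edges E C = {{p1, q1}, {p1, r1}, {q1, r1}, {u, p1}, {u, q1}, {w, p}, {w, q}}"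
    using IE tri_doubletons_relabel[OF T r1] by (simp add: insert_commute)
  have d: "distinct [p1, q1, r1, u, w]" using r1 u(1) w(1) unfolding tri_def by auto
  have C': "C = {p1, q1, r1, u, w}" using C r1(1) by auto
  show ?thesis by (rule diamond_and_vertex_TT[OF d C' IE']) (use w(2-4) r1(1) in auto)
qed

lemma vertex_triangle_vertex_steps_DD:
  assumes T: "tri E a b c" and u: "u \<notin> {a, b, c}" "p1 \<in> {a, b, c}" "q1 \<in> {a, b, c}" "p1 \<noteq> q1"
    and x: "x \<in> insert u {a, b, c}" and yz: "y \<notin> insert u {a, b, c}" "z \<notin> insert u {a, b, c}" "tri E x y z"
    and w: "w \<notin> insert y (insert z (insert u {a, b, c}))"
      "p \<in> insert y (insert z (insert u {a, b, c}))" "q \<in> insert y (insert z (insert u {a, b, c}))" "p \<noteq> q"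
    and C: "C = insert w (insert y (insert z (insert u {a, b, c})))"
    and IE: "induced_edges E C =
      {{w, p}, {w, q}} \<union> ({{x, y}, {x, z}, {y, z}} \<union> ({{u, p1}, {u, q1}} \<union> {{a, b}, {a, c}, {b, c}}))"
  shows "isomorphic C (induced_edges E C) DD_V DD_E"
proof -
  obtain r1 where r1: "{a, b, c} = {p1, q1, r1}" "tri E p1 q1 r1" using tri_relabel[OF T u(2-4)] by metis
  have IE': "induced_edges E C = {{p1, q1}, {p1, r1}, {q1, r1}, {u, p1}, {u, q1}, {x, y}, {x, z}, {y, z}, {w, p}, {w, q}}"
    using IE tri_doubletons_relabel[OF T r1] by (simp add: insert_commute)
  have d: "distinct [p1, q1, r1, u, y, z, w]" using r1 u(1) w(1) yz unfolding tri_def by auto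
  have C': "C = {p1, q1, r1, u, y, z, w}" using C r1(1) by auto
  have pq_in: "p \<in> {p1, q1, r1, u, y, z}" "q \<in> {p1, q1, r1, u, y, z}" using w(2, 3) r1(1) by auto
  consider "x = p1" | "x = q1" | "x = r1" | "x = u" using x r1(1) by auto
  then show ?thesis
  proof cases
    case 1
    have i: "induced_edges E C = {{p1, q1}, {p1, r1}, {q1, r1}, {p1, u}, {q1, u}, {p1, y}, {p1, z}, {y, z}, {w, p}, {w, q}}"
      using IE' 1 by (simp add: insert_commute)
    show ?thesis by (rule diamond_hub_triangle_and_vertex_DD[OF _ _ i])
      (use d pq_in w(4) in \<open>auto simp: C' insert_commute\<close>)
  next
    case 2
    have i: "induced_edges E C = {{q1, p1}, {q1, r1}, {p1, r1}, {q1, u}, {p1, u}, {q1, y}, {q1, z}, {y, z}, {w, p}, {w, q}}"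
      using IE' 2 by (simp add: insert_commute)
    show ?thesis by (rule diamond_hub_triangle_and_vertex_DD[OF _ _ i])
      (use d pq_in w(4) in \<open>auto simp: C' insert_commute\<close>)
  next
    case 3
    have i: "induced_edges E C = {{p1, q1}, {p1, r1}, {q1, r1}, {p1, u}, {q1, u}, {r1, y}, {r1, z}, {y, z}, {w, p}, {w, q}}"
      using IE' 3 by (simp add: insert_commute)
    show ?thesis by (rule FalseE, rule diamond_tip_triangle_and_vertex_impossible[OF _ _ i])
      (use d pq_in w(4) in \<open>auto simp: C' insert_commute\<close>)
  next
    case 4
    have i: "induced_edges E C = {{p1, q1}, {p1, u}, {q1, u}, {p1, r1}, {q1, r1}, {u, y}, {u, z}, {y, z}, {w, p}, {w, q}}"
      using IE' 4 by (simp add: insert_commute)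
    show ?thesis by (rule FalseE, rule diamond_tip_triangle_and_vertex_impossible[OF _ _ i])
      (use d pq_in w(4) in \<open>auto simp: C' insert_commute\<close>)
  qed
qed

lemma triangle_vertex_vertex_steps_DD:
  assumes T: "tri E a b c" and x: "x \<in> {a, b, c}"
    and yz: "y \<notin> {a, b, c}" "z \<notin> {a, b, c}" "tri E x y z"
    and u: "u \<notin> insert y (insert z {a, b, c})" "p1 \<in> insert y (insert z {a, b, c})"
      "q1 \<in> insert y (insert z {a, b, c})" "p1 \<noteq> q1"
    and w: "w \<notin> insert u (insert y (insert z {a, b, c}))"
      "p \<in> insert u (insert y (insert z {a, b, c}))" "q \<in> insert u (insert y (insert z {a, b, c}))" "p \<noteq> q"
    and C: "C = insert w (insert u (insert y (insert z {a, b, c})))"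
    and IE: "induced_edges E C =
      {{w, p}, {w, q}} \<union> ({{u, p1}, {u, q1}} \<union> ({{x, y}, {x, z}, {y, z}} \<union> {{a, b}, {a, c}, {b, c}}))"
  shows "isomorphic C (induced_edges E C) DD_V DD_E"
proof -
  obtain t t' where r1: "{a, b, c} = {x, t, t'}" "tri E x t t'" using tri_relabel_vertex[OF T x] by metis
  have IE': "induced_edges E C = {{x, t}, {x, t'}, {t, t'}, {x, y}, {x, z}, {y, z}, {u, p1}, {u, q1}, {w, p}, {w, q}}"
    using IE tri_doubletons_relabel[OF T r1] by (simp add: insert_commute)
  have d: "distinct [x, t, t', y, z, u, w]" using r1 u(1) w(1) yz unfolding tri_def by auto
  have C': "C = {x, t, t', y, z, u, w}" using C r1(1) by auto
  have pq_in: "p \<in> {x, t, t', y, z, u}" "q \<in> {x, t, t', y, z, u}" using w(2, 3) r1(1) by auto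
  have "p1 \<in> {x, t, t', y, z}" "q1 \<in> {x, t, t', y, z}" using u(2, 3) r1(1) by auto
  then consider "{p1, q1} = {x, t}" | "{p1, q1} = {x, t'}" | "{p1, q1} = {x, y}" | "{p1, q1} = {x, z}"
    | "{p1, q1} = {t, t'}" | "{p1, q1} = {y, z}"
    | "{p1, q1} = {t, y}" | "{p1, q1} = {t, z}" | "{p1, q1} = {t', y}" | "{p1, q1} = {t', z}"
    using u(4) by (auto simp: doubleton_eq_iff insert_commute)
  then show ?thesis
  proof cases
    case 1
    have i: "induced_edges E C = {{x, t}, {x, t'}, {t, t'}, {x, u}, {t, u}, {x, y}, {x, z}, {y, z}, {w, p}, {w, q}}"
      using doubleton_eq_iff[THEN iffD1, OF 1] IE' by (elim disjE conjE) (simp_all add: insert_commute)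
    show ?thesis by (rule diamond_hub_triangle_and_vertex_DD[OF _ _ i])
      (use d pq_in w(4) in \<open>auto simp: C' insert_commute\<close>)
  next
    case 2
    have i: "induced_edges E C = {{x, t'}, {x, t}, {t', t}, {x, u}, {t', u}, {x, y}, {x, z}, {y, z}, {w, p}, {w, q}}"
      using doubleton_eq_iff[THEN iffD1, OF 2] IE' by (elim disjE conjE) (simp_all add: insert_commute)
    show ?thesis by (rule diamond_hub_triangle_and_vertex_DD[OF _ _ i])
      (use d pq_in w(4) in \<open>auto simp: C' insert_commute\<close>)
  next
    case 3
    have i: "induced_edges E C = {{x, y}, {x, z}, {y, z}, {x, u}, {y, u}, {x, t}, {x, t'}, {t, t'}, {w, p}, {w, q}}"
      using doubleton_eq_iff[THEN iffD1, OF 3] IE' by (elim disjE conjE) (simp_all add: insert_commute)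
    show ?thesis by (rule diamond_hub_triangle_and_vertex_DD[OF _ _ i])
      (use d pq_in w(4) in \<open>auto simp: C' insert_commute\<close>)
  next
    case 4
    have i: "induced_edges E C = {{x, z}, {x, y}, {z, y}, {x, u}, {z, u}, {x, t}, {x, t'}, {t, t'}, {w, p}, {w, q}}"
      using doubleton_eq_iff[THEN iffD1, OF 4] IE' by (elim disjE conjE) (simp_all add: insert_commute)
    show ?thesis by (rule diamond_hub_triangle_and_vertex_DD[OF _ _ i])
      (use d pq_in w(4) in \<open>auto simp: C' insert_commute\<close>)
  next
    case 5
    have i: "induced_edges E C = {{t, t'}, {t, x}, {t', x}, {t, u}, {t', u}, {x, y}, {x, z}, {y, z}, {w, p}, {w, q}}"
      using doubleton_eq_iff[THEN iffD1, OF 5] IE' by (elim disjE conjE) (simp_all add: insert_commute)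
    show ?thesis by (rule FalseE, rule diamond_tip_triangle_and_vertex_impossible[OF _ _ i])
      (use d pq_in w(4) in \<open>auto simp: C' insert_commute\<close>)
  next
    case 6
    have i: "induced_edges E C = {{y, z}, {y, x}, {z, x}, {y, u}, {z, u}, {x, t}, {x, t'}, {t, t'}, {w, p}, {w, q}}"
      using doubleton_eq_iff[THEN iffD1, OF 6] IE' by (elim disjE conjE) (simp_all add: insert_commute)
    show ?thesis by (rule FalseE, rule diamond_tip_triangle_and_vertex_impossible[OF _ _ i])
      (use d pq_in w(4) in \<open>auto simp: C' insert_commute\<close>)
  next
    case 7
    have i: "induced_edges E C = {{x, t}, {x, t'}, {t, t'}, {x, y}, {x, z}, {y, z}, {u, t}, {u, y}, {w, p}, {w, q}}"
      using doubleton_eq_iff[THEN iffD1, OF 7] IE' by (elim disjE conjE) (simp_all add: insert_commute)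
    show ?thesis by (rule FalseE, rule bowtie_cross_vertex_impossible[OF _ _ i])
      (use d pq_in w(4) in \<open>auto simp: C' insert_commute\<close>)
  next
    case 8
    have i: "induced_edges E C = {{x, t}, {x, t'}, {t, t'}, {x, z}, {x, y}, {z, y}, {u, t}, {u, z}, {w, p}, {w, q}}"
      using doubleton_eq_iff[THEN iffD1, OF 8] IE' by (elim disjE conjE) (simp_all add: insert_commute)
    show ?thesis by (rule FalseE, rule bowtie_cross_vertex_impossible[OF _ _ i])
      (use d pq_in w(4) in \<open>auto simp: C' insert_commute\<close>)
  next
    case 9
    have i: "induced_edges E C = {{x, t'}, {x, t}, {t', t}, {x, y}, {x, z}, {y, z}, {u, t'}, {u, y}, {w, p}, {w, q}}"
      using doubleton_eq_iff[THEN iffD1, OF 9] IE' by (elim disjE conjE) (simp_all add: insert_commute)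
    show ?thesis by (rule FalseE, rule bowtie_cross_vertex_impossible[OF _ _ i])
      (use d pq_in w(4) in \<open>auto simp: C' insert_commute\<close>)
  next
    case 10
    have i: "induced_edges E C = {{x, t'}, {x, t}, {t', t}, {x, z}, {x, y}, {z, y}, {u, t'}, {u, z}, {w, p}, {w, q}}"
      using doubleton_eq_iff[THEN iffD1, OF 10] IE' by (elim disjE conjE) (simp_all add: insert_commute)
    show ?thesis by (rule FalseE, rule bowtie_cross_vertex_impossible[OF _ _ i])
      (use d pq_in w(4) in \<open>auto simp: C' insert_commute\<close>)
  qed
qed

lemma two_vertex_steps_shape:
  assumes b: "build E C S F (Suc 0) j" and C: "C = insert w S" and w: "w \<notin> S"
    and pq: "p \<in> S" "q \<in> S" "p \<noteq> q" "{w, p} \<in> E" "{w, q} \<in> E"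
  shows "isomorphic C (induced_edges E C) TT_V TT_E \<or> isomorphic C (induced_edges E C) DD_V DD_E"
proof -
  have "w \<in> C" using C by simp
  from build.add_vertex[OF b this w pq]
  have bC: "build E C C ({{w, p}, {w, q}} \<union> F) 2 j" unfolding C[symmetric] by (simp add: numeral_2_eq_2)
  then have j: "j \<le> 1" using build_weight by fastforce
  have IE: "induced_edges E C = {{w, p}, {w, q}} \<union> F" using build_edges_exact[OF bC] by simp
  from b show ?thesis
  proof (cases rule: build.cases)
    case (add_vertex S1 F1 u p1 q1)
    show ?thesis
    proof (cases j)
      case 0
      with add_vertex obtain a b c where S1: "S1 = {a, b, c}" "F1 = {{a, b}, {a, c}, {b, c}}" "tri E a b c"
        using build_start_cases by metis
      have "isomorphic C (induced_edges E C) TT_V TT_E"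
        by (rule vertex_vertex_steps_TT[OF S1(3), of u p1 q1 w p q])
          (use add_vertex S1 C w pq IE in simp_all)
      then show ?thesis ..
    next
      case (Suc j')
      with add_vertex j have "build E C S1 F1 0 (Suc 0)" by simp
      then show ?thesis
      proof (cases rule: build.cases)
        case (add_triangle S0 F0 x y z)
        then obtain a b c where S0: "S0 = {a, b, c}" "F0 = {{a, b}, {a, c}, {b, c}}" "tri E a b c"
          using build_start_cases by metis
        have "isomorphic C (induced_edges E C) DD_V DD_E"
          by (rule triangle_vertex_vertex_steps_DD[OF S0(3), of x y z u p1 q1 w p q])
            (use add_triangle add_vertex S0 C w pq IE in simp_all)
        then show ?thesis ..
      qed
    qed
  next
    case (add_triangle S1 F1 j' x y z)
    with j have "build E C S1 F1 (Suc 0) 0" by simp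
    then show ?thesis
    proof (cases rule: build.cases)
      case (add_vertex S0 F0 u p1 q1)
      then obtain a b c where S0: "S0 = {a, b, c}" "F0 = {{a, b}, {a, c}, {b, c}}" "tri E a b c"
        using build_start_cases by metis
      have "isomorphic C (induced_edges E C) DD_V DD_E"
        by (rule vertex_triangle_vertex_steps_DD[OF S0(3), of u p1 q1 x y z w p q])
          (use add_vertex S0 C w pq IE \<open>S = insert y (insert z S1)\<close>
          \<open>F = {{x, y}, {x, z}, {y, z}} \<union> F1\<close> \<open>x \<in> S1\<close> \<open>y \<notin> S1\<close> \<open>z \<notin> S1\<close>
          \<open>tri E x y z\<close> in simp_all)
      then show ?thesis ..
    qed
  qed
qed

lemma component_shape:
  "isomorphic C (induced_edges E C) TT_V TT_E \<or> isomorphic C (induced_edges E C) DD_V DD_E"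
proof -
  obtain F i j where b: "build E C C F i j" using build_exhausts by blast
  then show ?thesis
  proof (cases rule: build.cases)
    case (start a b c)
    then have "card C \<le> 3" by (simp add: card_insert_le_m1 card_insert_if)
    then show ?thesis using card_C by simp
  next
    case (add_triangle S F' i' x y z)
    then show ?thesis using last_step_not_triangle[of S x y z] by blast
  next
    case (add_vertex S F' i' w p q)
    have "4 * i + j \<le> 9" using build_weight[OF b] .
    then consider "i' = 0" | "i' = Suc 0" using add_vertex by linarith
    then show ?thesis
    proof cases
      case 1
      with add_vertex show ?thesis using single_vertex_step_impossible[of S F' j w p q] by simp
    next
      case 2
      with add_vertex show ?thesis using two_vertex_steps_shape[of S F' j w p q] by simp
    qed
  qed
qed

end

theorem mainTheorem19:
  fixes V :: "'a set" and E :: "'a set set"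
  assumes "graph V E"
    and "K3_1_stable V E"
    and "\<forall>(FV :: nat set) (FE :: nat set set).
           graph FV FE \<and> card FV < 25 \<and> real (card FE) / real (card FV) > (10::real) / 7
           \<longrightarrow> \<not> contains_subgraph FV FE V E"
  shows "\<forall>C \<in> components V E.
           isomorphic C (induced_edges E C) TT_V TT_E \<or>
           isomorphic C (induced_edges E C) DD_V DD_E"
proof
  fix C assume "C \<in> components V E"
  moreover have "7 * card (induced_edges E S) \<le> 10 * card S" if "S \<subseteq> V" "card S < 25" for S
    using sparse_induced_subgraphs[OF assms(1, 3) that] .
  ultimately interpret sparse_stable_component V E C
    using assms(1, 2) by unfold_locales
  show "isomorphic C (induced_edges E C) TT_V TT_E \<or> isomorphic C (induced_edges E C) DD_V DD_E"
    by (rule component_shape)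
qed

end
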